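(* Let $n=2$, let $\mathcal{D}$ be the set of strictly positive piecewise-constant functions $[0,1]\to\mathbb{R}_{>0}$, and let $\mathcal{M}$ be a mechanism on $\mathcal{D}\times\mathcal{D}$ that is truthful and proportional. Let $F^1=(f_1^1,f_2^1)$ with $f_1^1\equiv f_2^1\equiv 1$ on $[0,1]$, and put $X_1=\mathcal{M}_1(F^1)$, $X_2=\mathcal{M}_2(F^1)$. Assume $X_1,X_2$ are such that the functions below are piecewise-constant (e.g. $X_1,X_2$ finite unions of intervals). Fix $\varepsilon\in(0,1)$ and let $F^2=(f_1^2,f_2^2)$ where $f_1^2\equiv 1$ on $[0,1]$ and $f_2^2(x)=\varepsilon$ for $x\in X_1$, $f_2^2(x)=1$ for $x\in X_2$ (and, say, $f_2^2=1$ on the null set $[0,1]\setminus(X_1\cup X_2)$). Then $|X_1|=|X_2|=\frac12$, and $\mathcal{M}_1(F^2)=X_1$ and $\mathcal{M}_2(F^2)=X_2$ up to sets of Lebesgue measure zero.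
   Context: Agent $i$'s utility for a measurable $X\subseteq[0,1]$ is $v_i(X)=\int_X f_i$; $|X|$ is Lebesgue measure. An allocation is a pair of disjoint measurable subsets of $[0,1]$ (not necessarily covering $[0,1]$); $\mathcal{M}_i(F)$ is agent $i$'s piece. Proportional: $v_i(\mathcal{M}_i(F))\ge\frac12 v_i([0,1])$ for each $i$ w.r.t. the reported densities. Truthful: for each agent $i$, any profile and any alternative report $f_i'$ in the domain, agent $i$'s utility (w.r.t. the true $f_i$) from the truthful report is at least that from reporting $f_i'$, the other report held fixed. *)

theory Defs
  imports "HOL-Analysis.Analysis"
begin

text \<open>Densities are functions real => real; a report is identified with its
restriction to [0,1] by requiring it to vanish outside [0,1].\<close>

definition piecewise_const01 :: "(real \<Rightarrow> real) \<Rightarrow> bool" where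
  "piecewise_const01 f \<longleftrightarrow>
     (\<exists>xs::real list. sorted_wrt (<) xs \<and> xs \<noteq> [] \<and> hd xs = 0 \<and> last xs = 1 \<and>
        (\<forall>i < length xs - 1. \<exists>c. \<forall>x \<in> {xs ! i <..< xs ! (i+1)}. f x = c))"

definition pc_dom :: "(real \<Rightarrow> real) set" where
  "pc_dom = {f. piecewise_const01 f \<and> (\<forall>x \<in> {0..1}. f x > 0) \<and> (\<forall>x. x \<notin> {0..1} \<longrightarrow> f x = 0)}"

definition util :: "(real \<Rightarrow> real) \<Rightarrow> real set \<Rightarrow> real" where
  "util f X = (\<integral>x\<in>X. f x \<partial>lebesgue)"

definition is_allocation :: "real set \<times> real set \<Rightarrow> bool" where
  "is_allocation A \<longleftrightarrow> fst A \<in> sets lebesgue \<and> snd A \<in> sets lebesgue \<and>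
     fst A \<subseteq> {0..1} \<and> snd A \<subseteq> {0..1} \<and> fst A \<inter> snd A = {}"

type_synonym mechanism = "(real \<Rightarrow> real) \<Rightarrow> (real \<Rightarrow> real) \<Rightarrow> real set \<times> real set"

definition valid_mechanism :: "(real \<Rightarrow> real) set \<Rightarrow> mechanism \<Rightarrow> bool" where
  "valid_mechanism D M \<longleftrightarrow> (\<forall>f1\<in>D. \<forall>f2\<in>D. is_allocation (M f1 f2))"

definition proportional :: "(real \<Rightarrow> real) set \<Rightarrow> mechanism \<Rightarrow> bool" where
  "proportional D M \<longleftrightarrow> (\<forall>f1\<in>D. \<forall>f2\<in>D.
      util f1 (fst (M f1 f2)) \<ge> util f1 {0..1} / 2 \<and>
      util f2 (snd (M f1 f2)) \<ge> util f2 {0..1} / 2)"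

definition truthful :: "(real \<Rightarrow> real) set \<Rightarrow> mechanism \<Rightarrow> bool" where
  "truthful D M \<longleftrightarrow> (\<forall>f1\<in>D. \<forall>f2\<in>D. \<forall>g\<in>D.
      util f1 (fst (M f1 f2)) \<ge> util f1 (fst (M g f2)) \<and>
      util f2 (snd (M f1 f2)) \<ge> util f2 (snd (M f1 g)))"

end

theory Submission
  imports Defs
begin

text \<open>With both agents reporting the uniform density, proportionality forces each piece to
  have measure 1/2, so the two pieces cover [0,1] up to a null set. When agent 2 devalues
  agent 1's piece to \<open>\<epsilon>\<close>, truthfulness for both possible true densities says that agent 2's new
  piece is no larger than before yet worth at least as much under the devalued density; this
  is only possible if it misses agent 1's old piece, so it is agent 2's old piece up to a
  null set. Agent 1's new piece is disjoint from it and has measure at least 1/2, so it is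
  agent 1's old piece up to a null set.\<close>

lemma measure_eq_0_if_subset_Un:
  assumes "S \<subseteq> A \<union> B" "S \<in> sets M" "A \<in> fmeasurable M" "B \<in> fmeasurable M"
    and "measure M A = 0" "measure M B = 0"
  shows "measure M S = 0"
proof -
  have "measure M S \<le> measure M (A \<union> B)"
    using assms by (intro measure_mono_fmeasurable) auto
  also have "\<dots> \<le> measure M A + measure M B"
    using assms by (intro measure_Un_le) auto
  finally show ?thesis
    using assms(5,6) measure_nonneg[of M S] by linarith
qed

lemma measure_sym_diff_eq_0_if_Diff_null:
  assumes A: "A \<in> fmeasurable M" and B: "B \<in> fmeasurable M"
    and null: "measure M (A - B) = 0" and le: "measure M B \<le> measure M A"
  shows "measure M (sym_diff A B) = 0"
proof -
  have "measure M (A \<union> B) = measure M A + measure M (B - A)"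
    by (rule measure_Un2[OF A B])
  moreover have "measure M (A \<union> B) = measure M B + measure M (A - B)"
    by (subst Un_commute) (rule measure_Un2[OF B A])
  ultimately have "measure M (B - A) = 0"
    using null le measure_nonneg[of M "B - A"] by linarith
  moreover have "measure M (sym_diff A B) \<le> measure M (A - B) + measure M (B - A)"
    using A B by (intro measure_Un_le) (simp_all add: sets.Diff fmeasurableD)
  ultimately show ?thesis
    using null measure_nonneg[of M "sym_diff A B"] by linarith
qed

lemma measure_disjoint_halves:
  assumes S: "S \<in> fmeasurable M" and "A \<in> sets M" "B \<in> sets M"
    and "A \<union> B \<subseteq> S" "A \<inter> B = {}"
    and "measure M S \<le> 2 * measure M A" "measure M S \<le> 2 * measure M B"
  shows "2 * measure M A = measure M S" "2 * measure M B = measure M S"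
    and "measure M (S - (A \<union> B)) = 0"
proof -
  have AB: "A \<union> B \<in> fmeasurable M" and "A \<in> fmeasurable M" "B \<in> fmeasurable M"
    using assms by (auto intro: fmeasurableI2)
  then have "measure M (A \<union> B) = measure M A + measure M B"
    using assms by (intro measure_Union) (auto dest: fmeasurableD2)
  moreover have "measure M (S - (A \<union> B)) = measure M S - measure M (A \<union> B)"
    using AB assms by (intro measurable_measure_Diff) auto
  moreover have "0 \<le> measure M (S - (A \<union> B))"
    by (rule measure_nonneg)
  ultimately show "2 * measure M A = measure M S" "2 * measure M B = measure M S"
    and "measure M (S - (A \<union> B)) = 0"
    using assms(6,7) by linarith+
qed

text \<open>The two bounds on \<open>Y\<close> are agent 2's truthfulness when the uniform density is true and
  when the density devalued to \<open>e\<close> on \<open>X1\<close> is true.\<close>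

lemma measure_sym_diff_eq_0_if_devaluation:
  assumes S: "S \<in> fmeasurable M" and X1: "X1 \<in> fmeasurable M" and X2: "X2 \<in> fmeasurable M"
    and Y: "Y \<in> fmeasurable M" "Y \<subseteq> S"
    and cover: "measure M (S - (X1 \<union> X2)) = 0"
    and smaller: "measure M Y \<le> measure M X2"
    and worth: "measure M X2 \<le> e * measure M (Y \<inter> X1) + measure M (Y - X1)"
    and "e < 1"
  shows "measure M (sym_diff Y X2) = 0"
proof -
  have "Y - X1 = Y - (Y \<inter> X1)"
    by blast
  then have measure_Y: "measure M (Y - X1) = measure M Y - measure M (Y \<inter> X1)"
    using Y X1 by (simp add: measurable_measure_Diff fmeasurableD)
  have "(1 - e) * measure M (Y \<inter> X1) = measure M (Y \<inter> X1) - e * measure M (Y \<inter> X1)"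
    by (simp add: algebra_simps)
  then have "(1 - e) * measure M (Y \<inter> X1) \<le> (1 - e) * 0"
    using smaller worth measure_Y by linarith
  moreover have "0 < 1 - e"
    using \<open>e < 1\<close> by simp
  ultimately have "measure M (Y \<inter> X1) \<le> 0"
    using mult_le_cancel_left_pos by blast
  then have YX1: "measure M (Y \<inter> X1) = 0"
    using measure_nonneg[of M "Y \<inter> X1"] by linarith
  have "Y \<inter> X1 \<in> fmeasurable M" "S - (X1 \<union> X2) \<in> fmeasurable M"
    using Y X1 X2 S by (simp_all add: fmeasurable_Int_fmeasurable fmeasurable_Diff fmeasurableD)
  moreover have "Y - X2 \<subseteq> (Y \<inter> X1) \<union> (S - (X1 \<union> X2))" "Y - X2 \<in> sets M"
    using Y X2 by (auto simp: sets.Diff fmeasurableD)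
  ultimately have "measure M (Y - X2) = 0"
    using YX1 cover measure_eq_0_if_subset_Un by blast
  moreover have "measure M X2 \<le> measure M Y"
    using worth measure_Y YX1 by simp
  ultimately show ?thesis
    using measure_sym_diff_eq_0_if_Diff_null[OF Y(1) X2] by blast
qed

lemma measure_sym_diff_eq_0_if_disjoint_from_complement:
  assumes S: "S \<in> fmeasurable M" and X1: "X1 \<in> fmeasurable M" and X2: "X2 \<in> fmeasurable M"
    and Y1: "Y1 \<in> fmeasurable M" "Y1 \<subseteq> S" and Y2: "Y2 \<in> fmeasurable M"
    and disj: "Y1 \<inter> Y2 = {}" and cover: "measure M (S - (X1 \<union> X2)) = 0"
    and Y2X2: "measure M (sym_diff Y2 X2) = 0"
    and larger: "measure M X1 \<le> measure M Y1"
  shows "measure M (sym_diff Y1 X1) = 0"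
proof -
  have "sym_diff Y2 X2 \<in> fmeasurable M" "S - (X1 \<union> X2) \<in> fmeasurable M"
    using Y2 X1 X2 S by (simp_all add: fmeasurable.Un fmeasurable.Diff fmeasurable_Diff fmeasurableD)
  moreover have "Y1 - X1 \<subseteq> sym_diff Y2 X2 \<union> (S - (X1 \<union> X2))" "Y1 - X1 \<in> sets M"
    using Y1 X1 disj by (auto simp: sets.Diff fmeasurableD)
  ultimately have "measure M (Y1 - X1) = 0"
    using Y2X2 cover measure_eq_0_if_subset_Un by blast
  then show ?thesis
    using measure_sym_diff_eq_0_if_Diff_null[OF Y1(1) X1] larger by blast
qed

lemma lmeasurable_if_subset_unit_interval:
  assumes "S \<in> sets lebesgue" "S \<subseteq> {0..1::real}"
  shows "S \<in> lmeasurable"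
proof (rule fmeasurableI2)
  show "{0..1::real} \<in> lmeasurable"
    by simp
qed (use assms in auto)

lemma is_allocationD:
  assumes "is_allocation A"
  shows "fst A \<in> lmeasurable" "snd A \<in> lmeasurable" "fst A \<subseteq> {0..1}" "snd A \<subseteq> {0..1}"
    and "fst A \<inter> snd A = {}"
  using assms unfolding is_allocation_def by (auto intro!: lmeasurable_if_subset_unit_interval)

lemma indicator_unit_interval_in_pc_dom: "(indicator {0..1} :: real \<Rightarrow> real) \<in> pc_dom"
proof -
  have "piecewise_const01 (indicator {0..1} :: real \<Rightarrow> real)"
    unfolding piecewise_const01_def
    by (intro exI[of _ "[0, 1]"]) (auto intro!: exI[of _ 1] simp: less_Suc_eq)
  then show ?thesis
    unfolding pc_dom_def by auto
qed

lemma util_indicator_unit_interval: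
  assumes "X \<in> sets lebesgue" "X \<subseteq> {0..1::real}"
  shows "util (indicator {0..1}) X = measure lebesgue X"
proof -
  have "(\<lambda>x. indicator X x *\<^sub>R indicator {0..1::real} x) = (indicator X :: real \<Rightarrow> real)"
    using assms(2) by (auto simp: indicator_def fun_eq_iff)
  then show ?thesis
    unfolding util_def set_lebesgue_integral_def by simp
qed

lemma util_two_valued:
  assumes "X \<in> sets lebesgue" "X \<subseteq> {0..1::real}" "A \<in> sets lebesgue"
  shows "util (\<lambda>x. if x \<in> A then e else if x \<in> {0..1} then 1 else 0) X
       = e * measure lebesgue (X \<inter> A) + measure lebesgue (X - A)"
proof -
  have "X \<inter> A \<in> lmeasurable" "X - A \<in> lmeasurable"
    using assms by (simp_all add: lmeasurable_if_subset_unit_interval sets.Int sets.Diff subset_iff)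
  then have int: "integrable lebesgue (indicator (X \<inter> A) :: real \<Rightarrow> real)"
    "integrable lebesgue (indicator (X - A) :: real \<Rightarrow> real)"
    by (auto intro!: integrable_real_indicator simp: fmeasurable_def)
  have "(\<lambda>x. indicator X x *\<^sub>R (if x \<in> A then e else if x \<in> {0..1} then 1 else 0))
      = (\<lambda>x. e * indicator (X \<inter> A) x + indicator (X - A) x)"
    using assms(2) by (auto simp: indicator_def fun_eq_iff)
  then have "util (\<lambda>x. if x \<in> A then e else if x \<in> {0..1} then 1 else 0) X
      = (LINT x|lebesgue. e * indicator (X \<inter> A) x) + (LINT x|lebesgue. indicator (X - A) x)"
    unfolding util_def set_lebesgue_integral_def using int by simp
  then show ?thesis
    by simp
qed

theorem proposition2:
  fixes M :: mechanism and \<epsilon> :: real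
  assumes "valid_mechanism pc_dom M"
    and "truthful pc_dom M" and "proportional pc_dom M"
    and "0 < \<epsilon>" and "\<epsilon> < 1"
    and "(\<lambda>x. if x \<in> fst (M (indicator {0..1}) (indicator {0..1})) then \<epsilon>
              else if x \<in> {0..1} then 1 else 0) \<in> pc_dom"
  shows "measure lebesgue (fst (M (indicator {0..1}) (indicator {0..1}))) = 1/2
    \<and> measure lebesgue (snd (M (indicator {0..1}) (indicator {0..1}))) = 1/2
    \<and> measure lebesgue
        (sym_diff (fst (M (indicator {0..1})
            (\<lambda>x. if x \<in> fst (M (indicator {0..1}) (indicator {0..1})) then \<epsilon>
                 else if x \<in> {0..1} then 1 else 0)))
          (fst (M (indicator {0..1}) (indicator {0..1})))) = 0
    \<and> measure lebesgue
        (sym_diff (snd (M (indicator {0..1})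
            (\<lambda>x. if x \<in> fst (M (indicator {0..1}) (indicator {0..1})) then \<epsilon>
                 else if x \<in> {0..1} then 1 else 0)))
          (snd (M (indicator {0..1}) (indicator {0..1})))) = 0"
proof -
  define u :: "real \<Rightarrow> real" where "u = indicator {0..1}"
  define X1 X2 where "X1 = fst (M u u)" and "X2 = snd (M u u)"
  define g where "g = (\<lambda>x. if x \<in> X1 then \<epsilon> else if x \<in> {0..1} then 1 else (0::real))"
  define Y1 Y2 where "Y1 = fst (M u g)" and "Y2 = snd (M u g)"
  have u: "u \<in> pc_dom" and g: "g \<in> pc_dom"
    using indicator_unit_interval_in_pc_dom assms(6) by (simp_all add: u_def g_def X1_def)
  have "is_allocation (M u u)" "is_allocation (M u g)"
    using assms(1) u g unfolding valid_mechanism_def by blast+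
  note X = is_allocationD[OF this(1), folded X1_def X2_def]
    and Y = is_allocationD[OF this(2), folded Y1_def Y2_def]
  have util_u: "util u X = measure lebesgue X" if "X \<in> lmeasurable" "X \<subseteq> {0..1}" for X
    unfolding u_def using that by (simp add: util_indicator_unit_interval fmeasurableD)
  have util_g: "util g X = \<epsilon> * measure lebesgue (X \<inter> X1) + measure lebesgue (X - X1)"
    if "X \<in> lmeasurable" "X \<subseteq> {0..1}" for X
    unfolding g_def using that X(1) by (simp add: util_two_valued fmeasurableD)
  have "util u {0..1} / 2 \<le> util u X1" "util u {0..1} / 2 \<le> util u X2"
    "util u {0..1} / 2 \<le> util u Y1" "util u Y2 \<le> util u X2" "util g X2 \<le> util g Y2"
    using assms(2,3) u g unfolding proportional_def truthful_def X1_def X2_def Y1_def Y2_def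
    by blast+
  then have "1 \<le> 2 * measure lebesgue X1" "1 \<le> 2 * measure lebesgue X2"
    "1 \<le> 2 * measure lebesgue Y1" "measure lebesgue Y2 \<le> measure lebesgue X2"
    "measure lebesgue X2 \<le> \<epsilon> * measure lebesgue (Y2 \<inter> X1) + measure lebesgue (Y2 - X1)"
    using X Y util_u[of "{0..1}"] util_u util_g by (auto simp: Diff_triv Int_commute)
  moreover note measure_disjoint_halves[of "{0..1}" lebesgue X1 X2]
  ultimately have halves: "2 * measure lebesgue X1 = 1" "2 * measure lebesgue X2 = 1"
    and cover: "measure lebesgue ({0..1} - (X1 \<union> X2)) = 0"
    and X2_stable: "measure lebesgue (sym_diff Y2 X2) = 0"
    using X Y assms(5) measure_sym_diff_eq_0_if_devaluation[of "{0..1}" lebesgue X1 X2 Y2 \<epsilon>]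
    by (auto simp: fmeasurableD)
  then have "measure lebesgue (sym_diff Y1 X1) = 0"
    using X Y \<open>1 \<le> 2 * measure lebesgue Y1\<close>
      measure_sym_diff_eq_0_if_disjoint_from_complement[of "{0..1}" lebesgue X1 X2 Y1 Y2]
    by auto
  then show ?thesis
    using halves X2_stable unfolding Y1_def Y2_def g_def X1_def X2_def u_def by simp
qed

end
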